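(* For every round $r$, there is at least one block $b$ of round $r$ such that every valid block of round $r+2$ has a path to $b$.
   Context: There are $n=3f+1$ validators, at most $f$ Byzantine; every honest validator creates exactly one block in every round. Every valid block of round $r$ has as parents (hash references) at least $2f+1$ blocks of round $r-1$ from distinct validators. There is a path from $b$ to $b'$ if $b'$ is reached from $b$ by repeatedly following parent references. *)

theory Defs
  imports Main
begin

text \<open>A DAG of blocks. Each block has an author (validator), a round number and a set
of parents (hash references). Blocks of round 0 are genesis blocks.\<close>

definition valid_block ::
  "nat \<Rightarrow> ('b \<Rightarrow> 'v) \<Rightarrow> ('b \<Rightarrow> nat) \<Rightarrow> ('b \<Rightarrow> 'b set) \<Rightarrow> 'b \<Rightarrow> bool" where
  "valid_block f author round parents b \<longleftrightarrow>
     (0 < round b \<longrightarrow>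
        2 * f + 1 \<le> card (author ` {p \<in> parents b. round p = round b - 1}))"

definition has_path :: "('b \<Rightarrow> 'b set) \<Rightarrow> 'b \<Rightarrow> 'b \<Rightarrow> bool" where
  "has_path parents b b' \<longleftrightarrow> (\<lambda>x y. y \<in> parents x)\<^sup>*\<^sup>* b b'"

end

theory Submission
  imports Defs
begin

text \<open>Let \<open>H\<close> be the at least \<open>2f+1\<close> honest validators. The round-\<open>(r+1)\<close> block of each
honest validator has round-\<open>r\<close> parents from at least \<open>2f+1\<close> validators, at least \<open>f+1\<close> of them honest,
and an honest author determines its round-\<open>r\<close> block uniquely. Double counting the resulting
\<open>\<ge> |H|(f+1)\<close> honest-to-honest parent edges yields an honest \<open>u\<close> whose round-\<open>r\<close> block is a
parent of the round-\<open>(r+1)\<close> blocks of at least \<open>f+1\<close> honest validators. Any valid block of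
round \<open>r+2\<close> has round-\<open>(r+1)\<close> parents from at least \<open>2f+1\<close> validators; among \<open>3f+1\<close> validators this
set meets those \<open>f+1\<close>, which gives a path of length two to the block of \<open>u\<close>.\<close>

lemma sum_card_out_eq_sum_card_in:
  assumes "finite H"
  shows "(\<Sum>v\<in>H. card {u \<in> H. E v u}) = (\<Sum>u\<in>H. card {v \<in> H. E v u})"
proof -
  have card_as_sum: "card {x \<in> H. P x} = (\<Sum>x\<in>H. if P x then 1 else 0)" for P
    using assms by (simp add: sum.If_cases Int_def)
  show ?thesis
    unfolding card_as_sum by (rule sum.swap)
qed

lemma ex_in_degree_ge_min_out_degree:
  assumes "finite H" "H \<noteq> {}" "\<And>v. v \<in> H \<Longrightarrow> k \<le> card {u \<in> H. E v u}"
  shows "\<exists>u \<in> H. k \<le> card {v \<in> H. E v u}"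
proof (rule ccontr)
  assume "\<not> ?thesis"
  then have "(\<Sum>u\<in>H. card {v \<in> H. E v u}) < (\<Sum>u\<in>H. k)"
    using assms(1,2) by (intro sum_strict_mono) auto
  also have "\<dots> \<le> (\<Sum>v\<in>H. card {u \<in> H. E v u})"
    using assms(3) by (rule sum_mono)
  finally show False
    using sum_card_out_eq_sum_card_in[OF assms(1), of E] by simp
qed

lemma quorum_intersection:
  assumes "finite V" "A \<subseteq> V" "B \<subseteq> V" "card V < card A + card B"
  shows "A \<inter> B \<noteq> {}"
proof
  assume "A \<inter> B = {}"
  then have "card A + card B = card (A \<union> B)"
    using assms(1-3) card_Un_Int[of A B] finite_subset by fastforce
  also have "\<dots> \<le> card V"
    using assms(1-3) by (intro card_mono) auto
  finally show False
    using assms(4) by simp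
qed

locale validator_dag =
  fixes f :: nat
    and V Byz :: "'v set"
    and Blocks :: "'b set"
    and author :: "'b \<Rightarrow> 'v"
    and round :: "'b \<Rightarrow> nat"
    and parents :: "'b \<Rightarrow> 'b set"
  assumes finite_V: "finite V"
    and card_V: "card V = 3 * f + 1"
    and Byz_subset: "Byz \<subseteq> V"
    and card_Byz: "card Byz \<le> f"
    and author_in: "\<And>b. b \<in> Blocks \<Longrightarrow> author b \<in> V"
    and parents_closed: "\<And>b. b \<in> Blocks \<Longrightarrow> parents b \<subseteq> Blocks"
    and honest_one: "\<And>v r. v \<in> V - Byz \<Longrightarrow> \<exists>!b. b \<in> Blocks \<and> author b = v \<and> round b = r"
    and honest_valid: "\<And>b. b \<in> Blocks \<Longrightarrow> author b \<in> V - Byz \<Longrightarrow>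
                         valid_block f author round parents b"
begin

abbreviation honest :: "'v set" where
  "honest \<equiv> V - Byz"

definition block_of :: "nat \<Rightarrow> 'v \<Rightarrow> 'b" where
  "block_of r v = (THE b. b \<in> Blocks \<and> author b = v \<and> round b = r)"

lemma block_of:
  assumes "v \<in> honest"
  shows "block_of r v \<in> Blocks" "author (block_of r v) = v" "round (block_of r v) = r"
  using theI'[OF honest_one[OF assms]] unfolding block_of_def by blast+

lemma block_of_unique:
  assumes "v \<in> honest" "b \<in> Blocks" "author b = v" "round b = r"
  shows "b = block_of r v"
  using honest_one[OF assms(1)] block_of[OF assms(1)] assms(2-4) by blast

lemma card_honest: "2 * f + 1 \<le> card honest"
  using card_Diff_subset[OF finite_subset[OF Byz_subset finite_V] Byz_subset] card_V card_Byz
  by simp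

definition parent_authors :: "'b \<Rightarrow> 'v set" where
  "parent_authors b = author ` {p \<in> parents b. round p = round b - 1}"

lemma parent_authors_subset: "b \<in> Blocks \<Longrightarrow> parent_authors b \<subseteq> V"
  unfolding parent_authors_def using author_in parents_closed by blast

lemma card_parent_authors:
  "valid_block f author round parents b \<Longrightarrow> 0 < round b \<Longrightarrow> 2 * f + 1 \<le> card (parent_authors b)"
  unfolding valid_block_def parent_authors_def by simp

lemma card_honest_parent_authors:
  assumes "valid_block f author round parents b" "0 < round b"
  shows "f + 1 \<le> card (parent_authors b - Byz)"
proof -
  have "card (parent_authors b) - card Byz \<le> card (parent_authors b - Byz)"
    using finite_subset[OF Byz_subset finite_V] by (rule diff_card_le_card_Diff)
  then show ?thesis
    using card_parent_authors[OF assms] card_Byz by linarith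
qed

lemma block_of_in_parents:
  assumes "b \<in> Blocks" "v \<in> parent_authors b" "v \<in> honest"
  shows "block_of (round b - 1) v \<in> parents b"
proof -
  obtain p where p: "p \<in> parents b" "round p = round b - 1" "author p = v"
    using assms(2) unfolding parent_authors_def by blast
  have "p = block_of (round b - 1) v"
    using block_of_unique assms(1,3) parents_closed p by blast
  with p show ?thesis by simp
qed

definition supporters :: "nat \<Rightarrow> 'v \<Rightarrow> 'v set" where
  "supporters r u = {v \<in> honest. block_of r u \<in> parents (block_of (r + 1) v)}"

lemma ex_well_supported_block: "\<exists>u \<in> honest. f + 1 \<le> card (supporters r u)"
proof -
  have "f + 1 \<le> card {u \<in> honest. block_of r u \<in> parents (block_of (r + 1) v)}"
    if v: "v \<in> honest" for v
  proof -
    let ?c = "block_of (r + 1) v"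
    have c: "?c \<in> Blocks" "author ?c = v" "round ?c = r + 1"
      using block_of[OF v] by auto
    then have "valid_block f author round parents ?c"
      using honest_valid v by simp
    then have "f + 1 \<le> card (parent_authors ?c - Byz)"
      using card_honest_parent_authors c(3) by simp
    also have "\<dots> \<le> card {u \<in> honest. block_of r u \<in> parents ?c}"
      using block_of_in_parents[OF c(1)] c(3) parent_authors_subset[OF c(1)] finite_V
      by (intro card_mono) auto
    finally show ?thesis .
  qed
  moreover have "honest \<noteq> {}"
  proof
    assume "honest = {}"
    with card_honest show False by simp
  qed
  ultimately show ?thesis
    unfolding supporters_def using finite_V
    by (intro ex_in_degree_ge_min_out_degree) auto
qed

lemma has_path_to_supported_block:
  assumes b: "b \<in> Blocks" "round b = r + 2" "valid_block f author round parents b"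
    and u: "f + 1 \<le> card (supporters r u)"
  shows "has_path parents b (block_of r u)"
proof -
  have "card V < card (parent_authors b) + card (supporters r u)"
    using card_parent_authors[OF b(3)] b(2) u card_V by simp
  moreover have "supporters r u \<subseteq> V"
    unfolding supporters_def by blast
  ultimately obtain v where v: "v \<in> parent_authors b" "v \<in> supporters r u"
    using quorum_intersection[OF finite_V parent_authors_subset[OF b(1)]] by blast
  have "v \<in> honest"
    using v(2) unfolding supporters_def by blast
  then have "block_of (r + 1) v \<in> parents b"
    using block_of_in_parents[OF b(1) v(1)] b(2) by simp
  moreover have "block_of r u \<in> parents (block_of (r + 1) v)"
    using v(2) unfolding supporters_def by blast
  ultimately show ?thesis
    unfolding has_path_def
    by (meson converse_rtranclp_into_rtranclp rtranclp.rtrancl_refl)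
qed
end

theorem lemma10:
  fixes f :: nat
    and V Byz :: "'v set"
    and Blocks :: "'b set"
    and author :: "'b \<Rightarrow> 'v"
    and round :: "'b \<Rightarrow> nat"
    and parents :: "'b \<Rightarrow> 'b set"
    and r :: nat
  assumes finV: "finite V"
    and cardV: "card V = 3 * f + 1"
    and Byz_sub: "Byz \<subseteq> V"
    and cardByz: "card Byz \<le> f"
    and author_in: "\<And>b. b \<in> Blocks \<Longrightarrow> author b \<in> V"
    and parents_closed: "\<And>b. b \<in> Blocks \<Longrightarrow> parents b \<subseteq> Blocks"
    and honest_one: "\<And>v r'. v \<in> V - Byz \<Longrightarrow>
                        \<exists>!b. b \<in> Blocks \<and> author b = v \<and> round b = r'"
    and honest_valid: "\<And>b. b \<in> Blocks \<Longrightarrow> author b \<in> V - Byz \<Longrightarrow>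
                        valid_block f author round parents b"
  shows "\<exists>b \<in> Blocks. round b = r \<and>
           (\<forall>b' \<in> Blocks. round b' = r + 2 \<and> valid_block f author round parents b'
                \<longrightarrow> has_path parents b' b)"
proof -
  interpret validator_dag f V Byz Blocks author round parents
    using assms by unfold_locales auto
  obtain u where u: "u \<in> V - Byz" "f + 1 \<le> card (supporters r u)"
    using ex_well_supported_block by blast
  show ?thesis
  proof (intro bexI conjI ballI impI)
    show "block_of r u \<in> Blocks" "round (block_of r u) = r"
      using block_of[OF u(1)] by simp_all
    show "has_path parents b (block_of r u)"
      if "b \<in> Blocks" "round b = r + 2 \<and> valid_block f author round parents b" for b
      using has_path_to_supported_block[OF _ _ _ u(2)] that by simp
  qed
qed

end
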